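(* Let $N\ge1$, $z_1,\dots,z_N\in\mathbb{C}^*$, $n_1,\dots,n_N\in\mathbb{C}$, $z=z_1\cdots z_N$, and assume $z^2-z^{-2}\neq0$. Let $U=\mathrm{span}(a_1,\dots,a_N)$, $U'=\mathrm{span}(b_1,\dots,b_N)$ in $\mathrm{Cl}_N$, paired by $\langle a_j,b_i\rangle=\delta_{ij}$, and let \[ \Phi(X)=\sum_{i=1}^N z_1^{-1}\cdots z_{i-1}^{-1}z_{i+1}\cdots z_N\,a_i,\quad \Phi(Y)=\sum_{i=1}^N z_1^{-1}\cdots z_{i-1}^{-1}(z_i^2-z_i^{-2})z_{i+1}\cdots z_N\,b_i,\quad \Phi(G)=\sum_{i=1}^N(n_i+a_ib_i). \] Let $W=\{w\in U:\langle w,\Phi(Y)\rangle=0\}$, $W'=\{w'\in U':\langle\Phi(X),w'\rangle=0\}$, and let $\mathrm{Cl}_W\subset\mathrm{Cl}_N$ be the subalgebra generated by $W\cup W'$. Then the subalgebra of elements of $\mathrm{Cl}_W$ commuting with $\Phi(G)$ is the part of $\mathrm{Cl}_W$ of Euler degree $0$, i.e. the subalgebra generated by the products $ww'$ with $w\in W$, $w'\in W'$. Moreover, if $w_1,\dots,w_d$ is a basis of $W$ and $w'_1,\dots,w'_d$ is the basis of $W'$ with $\langle w_i,w'_j\rangle=\delta_{ij}$, then $E_{ij}\mapsto w_iw'_j$ (where $E_{ij}$ are the matrix units of $\mathfrak{gl}(W)\cong\mathfrak{gl}_d$) extends to an algebra homomorphism $U(\mathfrak{gl}(W))\to\mathrm{Cl}_W\subset\mathrm{Cl}_N$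 whose image is exactly this subalgebra.
   Context: $\mathrm{Cl}_N$ is the Clifford superalgebra over $\mathbb{C}$ generated by odd elements $a_1,\dots,a_N,b_1,\dots,b_N$ with relations $a_ia_j+a_ja_i=0$, $b_ib_j+b_jb_i=0$, $a_ib_j+b_ja_i=\delta_{ij}$. The Euler degree is the $\mathbb{Z}$-grading on $\mathrm{Cl}_N$ with $\deg a_i=1$, $\deg b_i=-1$. $U(\mathfrak{gl}(W))$ is the universal enveloping algebra of the Lie algebra $\mathfrak{gl}(W)$. *)

theory Defs
  imports Complex_Main
begin

text \<open>Concrete model of the Clifford superalgebra Cl_N: its (faithful, and since Cl_N
is simple of dimension 4^N, bijective) spinor representation on the exterior algebra
of C^N, with basis e_S indexed by subsets S of {0..<N}. An element of Cl_N is a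
matrix indexed by pairs of such subsets (entries outside are 0).
Generators are indexed 0..<N (paper: 1..N).\<close>

type_synonym cl = "nat set \<Rightarrow> nat set \<Rightarrow> complex"

definition cl_a :: "nat \<Rightarrow> nat \<Rightarrow> cl" where
  "cl_a N i = (\<lambda>T S. if S \<subseteq> {..<N} \<and> i < N \<and> i \<notin> S \<and> T = insert i S
                     then (-1) ^ card {j\<in>S. j < i} else 0)"

definition cl_b :: "nat \<Rightarrow> nat \<Rightarrow> cl" where
  "cl_b N i = (\<lambda>T S. if S \<subseteq> {..<N} \<and> i < N \<and> i \<in> S \<and> T = S - {i}
                     then (-1) ^ card {j\<in>S. j < i} else 0)"

definition cl_one :: "nat \<Rightarrow> cl" where
  "cl_one N = (\<lambda>T S. if T = S \<and> S \<subseteq> {..<N} then 1 else 0)"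

definition cl_zero :: cl where "cl_zero = (\<lambda>T S. 0)"

definition cl_add :: "cl \<Rightarrow> cl \<Rightarrow> cl" where
  "cl_add x y = (\<lambda>T S. x T S + y T S)"

definition cl_diff :: "cl \<Rightarrow> cl \<Rightarrow> cl" where
  "cl_diff x y = (\<lambda>T S. x T S - y T S)"

definition cl_smult :: "complex \<Rightarrow> cl \<Rightarrow> cl" where
  "cl_smult c x = (\<lambda>T S. c * x T S)"

definition cl_mult :: "nat \<Rightarrow> cl \<Rightarrow> cl \<Rightarrow> cl" where
  "cl_mult N x y = (\<lambda>T S. \<Sum>R\<in>Pow {..<N}. x T R * y R S)"

definition cl_comm :: "nat \<Rightarrow> cl \<Rightarrow> cl \<Rightarrow> cl" where
  "cl_comm N x y = cl_diff (cl_mult N x y) (cl_mult N y x)"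

definition cl_lin :: "nat \<Rightarrow> (nat \<Rightarrow> complex) \<Rightarrow> (nat \<Rightarrow> cl) \<Rightarrow> cl" where
  "cl_lin m c f = (\<lambda>T S. \<Sum>k<m. c k * f k T S)"

inductive_set cl_gen :: "nat \<Rightarrow> cl set \<Rightarrow> cl set" for N G where
  gen: "x \<in> G \<Longrightarrow> x \<in> cl_gen N G"
| one: "cl_one N \<in> cl_gen N G"
| add: "x \<in> cl_gen N G \<Longrightarrow> y \<in> cl_gen N G \<Longrightarrow> cl_add x y \<in> cl_gen N G"
| smult: "x \<in> cl_gen N G \<Longrightarrow> cl_smult c x \<in> cl_gen N G"
| mult: "x \<in> cl_gen N G \<Longrightarrow> y \<in> cl_gen N G \<Longrightarrow> cl_mult N x y \<in> cl_gen N G"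

text \<open>Homogeneous of Euler degree k (deg a_i = 1, deg b_i = -1): in the model,
a_i raises |S| by one and b_i lowers it by one.\<close>
definition cl_euler_homog :: "int \<Rightarrow> cl \<Rightarrow> bool" where
  "cl_euler_homog k x \<longleftrightarrow> (\<forall>T S. x T S \<noteq> 0 \<longrightarrow> int (card T) = int (card S) + k)"

definition cl_U :: "nat \<Rightarrow> cl set" where
  "cl_U N = {cl_lin N c (cl_a N) | c. True}"

definition cl_U' :: "nat \<Rightarrow> cl set" where
  "cl_U' N = {cl_lin N c (cl_b N) | c. True}"

text \<open>Bilinear pairing U x U' -> C with <a_j,b_i> = delta_ij. For u = sum c_i a_i the
coefficient c_i is the entry u {i} {}; for u' = sum d_i b_i, d_i = u' {} {i}.\<close>
definition cl_pair :: "nat \<Rightarrow> cl \<Rightarrow> cl \<Rightarrow> complex" where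
  "cl_pair N u u' = (\<Sum>i<N. u {i} {} * u' {} {i})"

definition PhiX :: "nat \<Rightarrow> (nat \<Rightarrow> complex) \<Rightarrow> cl" where
  "PhiX N z = cl_lin N (\<lambda>i. (\<Prod>j<i. inverse (z j)) * (\<Prod>j\<in>{i<..<N}. z j)) (cl_a N)"

definition PhiY :: "nat \<Rightarrow> (nat \<Rightarrow> complex) \<Rightarrow> cl" where
  "PhiY N z = cl_lin N (\<lambda>i. (\<Prod>j<i. inverse (z j)) * ((z i)^2 - (inverse (z i))^2)
                              * (\<Prod>j\<in>{i<..<N}. z j)) (cl_b N)"

definition PhiG :: "nat \<Rightarrow> (nat \<Rightarrow> complex) \<Rightarrow> cl" where
  "PhiG N n = (\<lambda>T S. \<Sum>i<N. n i * cl_one N T S + cl_mult N (cl_a N i) (cl_b N i) T S)"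

definition cl_W :: "nat \<Rightarrow> (nat \<Rightarrow> complex) \<Rightarrow> cl set" where
  "cl_W N z = {w \<in> cl_U N. cl_pair N w (PhiY N z) = 0}"

definition cl_W' :: "nat \<Rightarrow> (nat \<Rightarrow> complex) \<Rightarrow> cl set" where
  "cl_W' N z = {w' \<in> cl_U' N. cl_pair N (PhiX N z) w' = 0}"

end

theory Submission
  imports Defs
begin

text \<open>In the spinor model the a_i and b_i are creation and annihilation operators on the
exterior algebra, and Phi(G) acts on e_S by the scalar sum_i n_i + |S|. Hence an element commutes
with Phi(G) exactly when it preserves |S|, i.e. has Euler degree 0. From the anticommutator
u u' + u' u = <u,u'> for u in U, u' in U' one gets the gl_d relations for the products w_i w'_j.
For the degree zero part, the same anticommutators let one rewrite every word in W and W' as a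
combination of normally ordered words w...w q or w'...w' q with q a polynomial in the w_i w'_j;
the Euler degree of such a word is its number of w's minus its number of w''s, so the degree zero
component is a polynomial in the w_i w'_j.\<close>

section \<open>The algebra of the model\<close>

definition cl_supported :: "nat \<Rightarrow> cl \<Rightarrow> bool" where
  "cl_supported N x \<longleftrightarrow> (\<forall>T S. x T S \<noteq> 0 \<longrightarrow> T \<subseteq> {..<N} \<and> S \<subseteq> {..<N})"

abbreviation cl_span :: "nat \<Rightarrow> (nat \<Rightarrow> cl) \<Rightarrow> cl set" where
  "cl_span d w \<equiv> {cl_lin d c w | c. True}"

lemma cl_mult_assoc: "cl_mult N (cl_mult N x y) v = cl_mult N x (cl_mult N y v)"
  unfolding cl_mult_def
  by (auto simp: fun_eq_iff sum_distrib_left sum_distrib_right mult.assoc intro: sum.swap)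

lemma cl_mult_add_left: "cl_mult N (cl_add x y) v = cl_add (cl_mult N x v) (cl_mult N y v)"
  unfolding cl_mult_def cl_add_def by (auto simp: distrib_right sum.distrib)

lemma cl_mult_add_right: "cl_mult N v (cl_add x y) = cl_add (cl_mult N v x) (cl_mult N v y)"
  unfolding cl_mult_def cl_add_def by (auto simp: distrib_left sum.distrib)

lemma cl_mult_diff_right: "cl_mult N v (cl_diff x y) = cl_diff (cl_mult N v x) (cl_mult N v y)"
  unfolding cl_mult_def cl_diff_def by (auto simp: right_diff_distrib sum_subtractf)

lemma cl_mult_smult_left: "cl_mult N (cl_smult c x) v = cl_smult c (cl_mult N x v)"
  unfolding cl_mult_def cl_smult_def by (auto simp: sum_distrib_left mult.assoc)

lemma cl_mult_smult_right: "cl_mult N v (cl_smult c x) = cl_smult c (cl_mult N v x)"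
  unfolding cl_mult_def cl_smult_def by (auto simp: sum_distrib_left mult.left_commute)

lemma cl_mult_zero_right: "cl_mult N v cl_zero = cl_zero"
  unfolding cl_mult_def cl_zero_def by auto

lemma cl_mult_lin_left: "cl_mult N (cl_lin m c f) y = cl_lin m c (\<lambda>k. cl_mult N (f k) y)"
  unfolding cl_mult_def cl_lin_def
  by (auto simp: fun_eq_iff sum_distrib_left sum_distrib_right mult.assoc intro: sum.swap)

lemma cl_mult_lin_right: "cl_mult N y (cl_lin m c f) = cl_lin m c (\<lambda>k. cl_mult N y (f k))"
  unfolding cl_mult_def cl_lin_def
  by (auto simp: fun_eq_iff sum_distrib_left mult.left_commute intro: sum.swap)

lemma cl_mult_lin_lin:
  "cl_mult N (cl_lin m c f) (cl_lin m' e g) T S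
     = (\<Sum>k<m. \<Sum>l<m'. c k * e l * cl_mult N (f k) (g l) T S)"
  by (subst cl_mult_lin_left, subst cl_mult_lin_right)
    (simp add: cl_lin_def sum_distrib_left mult.assoc)

lemma cl_lin_0: "cl_lin 0 c f = cl_zero"
  unfolding cl_lin_def cl_zero_def by auto

lemma cl_lin_Suc: "cl_lin (Suc m) c f = cl_add (cl_lin m c f) (cl_smult (c m) (f m))"
  unfolding cl_lin_def cl_add_def cl_smult_def by auto

lemma cl_lin_unit: "k < m \<Longrightarrow> cl_lin m (\<lambda>l. if l = k then 1 else 0) f = f k"
  unfolding cl_lin_def by (simp add: fun_eq_iff if_distrib[of "\<lambda>c. c * _"] cong: if_cong)

lemma cl_span_member: "k < m \<Longrightarrow> f k \<in> cl_span m f"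
  by (metis (mono_tags, lifting) cl_lin_unit mem_Collect_eq)

lemma cl_add_commute: "cl_add x y = cl_add y x"
  unfolding cl_add_def by (simp add: add.commute)

lemma cl_diff_eq_add_smult: "cl_diff x y = cl_add x (cl_smult (-1) y)"
  unfolding cl_diff_def cl_add_def cl_smult_def by simp

lemma cl_smult_zero: "cl_smult 0 x = cl_zero"
  unfolding cl_smult_def cl_zero_def by simp

lemma cl_one_mult:
  assumes "cl_supported N x" shows "cl_mult N (cl_one N) x = x"
proof (intro ext)
  fix T S
  have "cl_mult N (cl_one N) x T S = (\<Sum>R\<in>Pow {..<N}. if T = R then x R S else 0)"
    unfolding cl_mult_def cl_one_def by (intro sum.cong) auto
  also have "\<dots> = x T S"
    using assms unfolding cl_supported_def by (cases "T \<subseteq> {..<N}") auto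
  finally show "cl_mult N (cl_one N) x T S = x T S" .
qed

lemma cl_mult_one:
  assumes "cl_supported N x" shows "cl_mult N x (cl_one N) = x"
proof (intro ext)
  fix T S
  have "cl_mult N x (cl_one N) T S = (\<Sum>R\<in>Pow {..<N}. if R = S then x T R else 0)"
    unfolding cl_mult_def cl_one_def by (intro sum.cong) auto
  also have "\<dots> = x T S"
    using assms unfolding cl_supported_def by (cases "S \<subseteq> {..<N}") auto
  finally show "cl_mult N x (cl_one N) T S = x T S" .
qed

lemma cl_supported_a: "cl_supported N (cl_a N i)"
  unfolding cl_supported_def cl_a_def by auto

lemma cl_supported_b: "cl_supported N (cl_b N i)"
  unfolding cl_supported_def cl_b_def by auto

lemma cl_supported_one: "cl_supported N (cl_one N)"
  unfolding cl_supported_def cl_one_def by auto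

lemma cl_supported_zero: "cl_supported N cl_zero"
  unfolding cl_supported_def cl_zero_def by auto

lemma cl_supported_add: "cl_supported N x \<Longrightarrow> cl_supported N y \<Longrightarrow> cl_supported N (cl_add x y)"
  unfolding cl_supported_def cl_add_def by (metis add.right_neutral add_0)

lemma cl_supported_smult: "cl_supported N x \<Longrightarrow> cl_supported N (cl_smult c x)"
  unfolding cl_supported_def cl_smult_def by auto

lemma cl_supported_mult:
  assumes "cl_supported N x" "cl_supported N y"
  shows "cl_supported N (cl_mult N x y)"
  unfolding cl_supported_def
proof (intro allI impI)
  fix T S assume "cl_mult N x y T S \<noteq> 0"
  then obtain R where "x T R * y R S \<noteq> 0"
    unfolding cl_mult_def by (meson sum.not_neutral_contains_not_neutral)
  then have "x T R \<noteq> 0" "y R S \<noteq> 0" by auto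
  then show "T \<subseteq> {..<N} \<and> S \<subseteq> {..<N}" using assms unfolding cl_supported_def by blast
qed

lemma cl_supported_lin: "(\<And>k. k < m \<Longrightarrow> cl_supported N (f k)) \<Longrightarrow> cl_supported N (cl_lin m c f)"
  by (induction m) (auto simp: cl_lin_0 cl_lin_Suc cl_supported_zero cl_supported_add cl_supported_smult)

lemma cl_supported_U: "u \<in> cl_U N \<Longrightarrow> cl_supported N u"
  unfolding cl_U_def by (auto intro!: cl_supported_lin cl_supported_a)

lemma cl_supported_U': "u \<in> cl_U' N \<Longrightarrow> cl_supported N u"
  unfolding cl_U'_def by (auto intro!: cl_supported_lin cl_supported_b)

lemma cl_supported_gen:
  assumes "\<And>g. g \<in> G \<Longrightarrow> cl_supported N g" "x \<in> cl_gen N G"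
  shows "cl_supported N x"
  using assms(2)
  by induction (auto intro: assms(1) cl_supported_one cl_supported_add cl_supported_smult cl_supported_mult)

section \<open>Canonical anticommutation relations\<close>

definition cl_transpose :: "cl \<Rightarrow> cl" where
  "cl_transpose x = (\<lambda>T S. x S T)"

lemma cl_transpose_mult:
  "cl_transpose (cl_mult N x y) = cl_mult N (cl_transpose y) (cl_transpose x)"
  unfolding cl_transpose_def cl_mult_def by (simp add: mult.commute)

lemma cl_transpose_add: "cl_transpose (cl_add x y) = cl_add (cl_transpose x) (cl_transpose y)"
  unfolding cl_transpose_def cl_add_def by simp

lemma cl_mult_a_entry:
  "cl_mult N x (cl_a N i) T S =
     (if S \<subseteq> {..<N} \<and> i < N \<and> i \<notin> S then x T (insert i S) * (-1) ^ card {j\<in>S. j < i} else 0)"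
proof (cases "S \<subseteq> {..<N} \<and> i < N \<and> i \<notin> S")
  case True
  then have "cl_mult N x (cl_a N i) T S
      = (\<Sum>R\<in>Pow {..<N}. if R = insert i S then x T R * (-1) ^ card {j\<in>S. j < i} else 0)"
    unfolding cl_mult_def cl_a_def by (intro sum.cong) auto
  then show ?thesis using True by simp
next
  case False
  then have "cl_a N i R S = 0" for R by (auto simp: cl_a_def)
  then show ?thesis using False by (auto simp: cl_mult_def)
qed

lemma cl_mult_b_entry:
  "cl_mult N x (cl_b N i) T S =
     (if S \<subseteq> {..<N} \<and> i < N \<and> i \<in> S then x T (S - {i}) * (-1) ^ card {j\<in>S. j < i} else 0)"
proof (cases "S \<subseteq> {..<N} \<and> i < N \<and> i \<in> S")
  case True
  then have "cl_mult N x (cl_b N i) T S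
      = (\<Sum>R\<in>Pow {..<N}. if R = S - {i} then x T R * (-1) ^ card {j\<in>S. j < i} else 0)"
    unfolding cl_mult_def cl_b_def by (intro sum.cong) auto
  then show ?thesis using True by auto
next
  case False
  then have "cl_b N i R S = 0" for R by (auto simp: cl_b_def)
  then show ?thesis using False by (auto simp: cl_mult_def)
qed

lemma sign_card_insert:
  assumes "finite S" "i \<notin> S"
  shows "(-1::complex) ^ card {l\<in>insert i S. l < j} = (if i < j then -1 else 1) * (-1) ^ card {l\<in>S. l < j}"
proof (cases "i < j")
  case True
  then have "{l\<in>insert i S. l < j} = insert i {l\<in>S. l < j}" by auto
  then show ?thesis using True assms by simp
next
  case False
  then have "{l\<in>insert i S. l < j} = {l\<in>S. l < j}" by auto
  then show ?thesis using False by simp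
qed

lemma sign_card_remove:
  assumes "finite S" "i \<in> S"
  shows "(-1::complex) ^ card {l\<in>S - {i}. l < j} = (if i < j then -1 else 1) * (-1) ^ card {l\<in>S. l < j}"
  using sign_card_insert[of "S - {i}" i j] assms by (auto simp: insert_absorb)

lemma cl_b_eq_transpose: "cl_b N i = cl_transpose (cl_a N i)"
proof (intro ext)
  fix T S
  have "{j\<in>insert i T. j < i} = {j\<in>T. j < i}" for T by auto
  then show "cl_b N i T S = cl_transpose (cl_a N i) T S"
    unfolding cl_b_def cl_a_def cl_transpose_def by (auto simp: insert_absorb)
qed

lemma sign_square: "((-1::complex) ^ n) * (-1) ^ n = 1"
  by (simp add: power_mult_distrib[symmetric])

lemma cl_a_b_same_entry:
  assumes "i < N"
  shows "cl_mult N (cl_a N i) (cl_b N i) T S = (if S \<subseteq> {..<N} \<and> i \<in> S \<and> T = S then 1 else 0)"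
proof -
  have "{l\<in>S - {i}. l < i} = {l\<in>S. l < i}" by auto
  then show ?thesis
    using assms by (auto simp: cl_mult_b_entry cl_a_def insert_absorb sign_square)
qed

lemma cl_b_a_same_entry:
  assumes "i < N"
  shows "cl_mult N (cl_b N i) (cl_a N i) T S = (if S \<subseteq> {..<N} \<and> i \<notin> S \<and> T = S then 1 else 0)"
proof -
  have "{l\<in>insert i S. l < i} = {l\<in>S. l < i}" by auto
  then show ?thesis
    using assms by (auto simp: cl_mult_a_entry cl_b_def sign_square)
qed

lemma cl_a_b_anticomm:
  assumes "i < N" "j < N"
  shows "cl_add (cl_mult N (cl_a N i) (cl_b N j)) (cl_mult N (cl_b N j) (cl_a N i))
           = cl_smult (if i = j then 1 else 0) (cl_one N)"
proof (intro ext)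
  fix T S
  show "cl_add (cl_mult N (cl_a N i) (cl_b N j)) (cl_mult N (cl_b N j) (cl_a N i)) T S
          = cl_smult (if i = j then 1 else 0) (cl_one N) T S"
  proof (cases "i = j")
    case True
    then show ?thesis
      using assms by (auto simp: cl_add_def cl_smult_def cl_one_def cl_a_b_same_entry cl_b_a_same_entry)
  next
    case False
    show ?thesis
    proof (cases "S \<subseteq> {..<N} \<and> j \<in> S \<and> i \<notin> S \<and> T = insert i (S - {j})")
      case True
      then have S: "finite S" "S \<subseteq> {..<N}" "j \<in> S" "i \<notin> S" "T = insert i (S - {j})"
        using finite_subset by blast+
      define \<sigma> where "\<sigma> k = (-1::complex) ^ card {l\<in>S. l < k}" for k
      have "cl_mult N (cl_a N i) (cl_b N j) T S = cl_a N i T (S - {j}) * \<sigma> j"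
        using S assms by (simp add: cl_mult_b_entry \<sigma>_def)
      also have "\<dots> = (-1) ^ card {l\<in>S - {j}. l < i} * \<sigma> j"
        using S assms by (auto simp: cl_a_def)
      also have "\<dots> = (if j < i then -1 else 1) * \<sigma> i * \<sigma> j"
        by (subst sign_card_remove[OF S(1,3)]) (simp add: \<sigma>_def)
      finally have ab: "cl_mult N (cl_a N i) (cl_b N j) T S = (if j < i then -1 else 1) * \<sigma> i * \<sigma> j" .
      have "cl_mult N (cl_b N j) (cl_a N i) T S = cl_b N j T (insert i S) * \<sigma> i"
        using S assms by (simp add: cl_mult_a_entry \<sigma>_def)
      also have "\<dots> = (-1) ^ card {l\<in>insert i S. l < j} * \<sigma> i"
        using S assms False by (auto simp: cl_b_def insert_Diff_if)
      also have "\<dots> = (if i < j then -1 else 1) * \<sigma> j * \<sigma> i"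
        by (subst sign_card_insert[OF S(1,4)]) (simp add: \<sigma>_def)
      finally have ba: "cl_mult N (cl_b N j) (cl_a N i) T S = (if i < j then -1 else 1) * \<sigma> j * \<sigma> i" .
      have "cl_mult N (cl_a N i) (cl_b N j) T S + cl_mult N (cl_b N j) (cl_a N i) T S
          = ((if j < i then -1 else 1) + (if i < j then -1 else 1)) * (\<sigma> i * \<sigma> j)"
        unfolding ab ba by (simp add: algebra_simps)
      also have "\<dots> = 0" using False by auto
      finally show ?thesis using False by (simp add: cl_add_def cl_smult_def)
    next
      case outside: False
      then show ?thesis
        using False assms
        by (simp add: cl_add_def cl_smult_def cl_mult_a_entry cl_mult_b_entry)
          (auto simp: cl_a_def cl_b_def insert_Diff_if)
    qed
  qed
qed

lemma cl_a_anticomm: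
  assumes "i < N" "j < N"
  shows "cl_add (cl_mult N (cl_a N i) (cl_a N j)) (cl_mult N (cl_a N j) (cl_a N i)) = cl_zero"
proof (intro ext)
  fix T S
  show "cl_add (cl_mult N (cl_a N i) (cl_a N j)) (cl_mult N (cl_a N j) (cl_a N i)) T S = cl_zero T S"
  proof (cases "S \<subseteq> {..<N} \<and> i \<noteq> j \<and> i \<notin> S \<and> j \<notin> S \<and> T = insert i (insert j S)")
    case True
    then have S: "finite S" "S \<subseteq> {..<N}" "i \<noteq> j" "i \<notin> S" "j \<notin> S" "T = insert i (insert j S)"
      using finite_subset by blast+
    define \<sigma> where "\<sigma> k = (-1::complex) ^ card {l\<in>S. l < k}" for k
    have "cl_mult N (cl_a N i) (cl_a N j) T S = (-1) ^ card {l\<in>insert j S. l < i} * \<sigma> j"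
      using S assms by (simp add: cl_mult_a_entry \<sigma>_def) (auto simp: cl_a_def)
    also have "\<dots> = (if j < i then -1 else 1) * \<sigma> i * \<sigma> j"
      by (subst sign_card_insert[OF S(1,5)]) (simp add: \<sigma>_def)
    finally have ij: "cl_mult N (cl_a N i) (cl_a N j) T S = (if j < i then -1 else 1) * \<sigma> i * \<sigma> j" .
    have "cl_mult N (cl_a N j) (cl_a N i) T S = (-1) ^ card {l\<in>insert i S. l < j} * \<sigma> i"
      using S assms by (simp add: cl_mult_a_entry \<sigma>_def) (auto simp: cl_a_def insert_commute)
    also have "\<dots> = (if i < j then -1 else 1) * \<sigma> j * \<sigma> i"
      by (subst sign_card_insert[OF S(1,4)]) (simp add: \<sigma>_def)
    finally have ji: "cl_mult N (cl_a N j) (cl_a N i) T S = (if i < j then -1 else 1) * \<sigma> j * \<sigma> i" .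
    show ?thesis
      unfolding cl_add_def cl_zero_def ij ji using S(3) by (auto simp: algebra_simps)
  next
    case False
    then show ?thesis
      by (simp add: cl_add_def cl_zero_def cl_mult_a_entry) (auto simp: cl_a_def insert_commute)
  qed
qed

lemma cl_b_anticomm:
  assumes "i < N" "j < N"
  shows "cl_add (cl_mult N (cl_b N i) (cl_b N j)) (cl_mult N (cl_b N j) (cl_b N i)) = cl_zero"
proof -
  have "cl_add (cl_mult N (cl_b N i) (cl_b N j)) (cl_mult N (cl_b N j) (cl_b N i))
      = cl_transpose (cl_add (cl_mult N (cl_a N j) (cl_a N i)) (cl_mult N (cl_a N i) (cl_a N j)))"
    by (simp add: cl_b_eq_transpose cl_transpose_mult cl_transpose_add)
  then show ?thesis
    using cl_a_anticomm[OF assms(2,1)] by (simp add: cl_transpose_def cl_zero_def)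
qed

lemma cl_anticomm_lin:
  assumes "\<And>k l. k < m \<Longrightarrow> l < m' \<Longrightarrow>
             cl_add (cl_mult N (f k) (g l)) (cl_mult N (g l) (f k)) = cl_smult (p k l) (cl_one N)"
  shows "cl_add (cl_mult N (cl_lin m c f) (cl_lin m' e g)) (cl_mult N (cl_lin m' e g) (cl_lin m c f))
           = cl_smult (\<Sum>k<m. \<Sum>l<m'. c k * e l * p k l) (cl_one N)"
proof (intro ext)
  fix T S
  have fg: "cl_mult N (f k) (g l) T S + cl_mult N (g l) (f k) T S = p k l * cl_one N T S"
    if "k < m" "l < m'" for k l
    using assms[OF that] unfolding cl_add_def cl_smult_def by meson
  have "cl_add (cl_mult N (cl_lin m c f) (cl_lin m' e g)) (cl_mult N (cl_lin m' e g) (cl_lin m c f)) T S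
      = (\<Sum>k<m. \<Sum>l<m'. c k * e l * cl_mult N (f k) (g l) T S)
        + (\<Sum>k<m. \<Sum>l<m'. e l * c k * cl_mult N (g l) (f k) T S)"
    unfolding cl_add_def cl_mult_lin_lin by (subst (2) sum.swap) simp
  also have "\<dots> = (\<Sum>k<m. \<Sum>l<m'. c k * e l * (cl_mult N (f k) (g l) T S + cl_mult N (g l) (f k) T S))"
    by (simp add: sum.distrib[symmetric] algebra_simps)
  also have "\<dots> = (\<Sum>k<m. \<Sum>l<m'. c k * e l * p k l) * cl_one N T S"
    by (simp add: fg sum_distrib_right mult.assoc)
  finally show "cl_add (cl_mult N (cl_lin m c f) (cl_lin m' e g)) (cl_mult N (cl_lin m' e g) (cl_lin m c f)) T S
      = cl_smult (\<Sum>k<m. \<Sum>l<m'. c k * e l * p k l) (cl_one N) T S"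
    unfolding cl_smult_def .
qed

lemma cl_lin_a_entry:
  assumes "i < N" shows "cl_lin N c (cl_a N) {i} {} = c i"
proof -
  have "cl_lin N c (cl_a N) {i} {} = (\<Sum>k<N. if k = i then c k else 0)"
    unfolding cl_lin_def cl_a_def by (intro sum.cong) auto
  then show ?thesis using assms by simp
qed

lemma cl_lin_b_entry:
  assumes "i < N" shows "cl_lin N c (cl_b N) {} {i} = c i"
proof -
  have "cl_lin N c (cl_b N) {} {i} = (\<Sum>k<N. if k = i then c k else 0)"
    unfolding cl_lin_def cl_b_def by (intro sum.cong) (auto simp: Collect_conj_eq)
  then show ?thesis using assms by simp
qed

lemma cl_U_U'_anticomm:
  assumes "u \<in> cl_U N" "u' \<in> cl_U' N"
  shows "cl_add (cl_mult N u u') (cl_mult N u' u) = cl_smult (cl_pair N u u') (cl_one N)"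
proof -
  obtain c e where u: "u = cl_lin N c (cl_a N)" and u': "u' = cl_lin N e (cl_b N)"
    using assms unfolding cl_U_def cl_U'_def by blast
  have "cl_add (cl_mult N u u') (cl_mult N u' u)
      = cl_smult (\<Sum>k<N. \<Sum>l<N. c k * e l * (if k = l then 1 else 0)) (cl_one N)"
    unfolding u u' by (rule cl_anticomm_lin) (rule cl_a_b_anticomm)
  also have "(\<Sum>k<N. \<Sum>l<N. c k * e l * (if k = l then 1 else 0)) = (\<Sum>k<N. c k * e k)"
    by (simp add: if_distrib[of "\<lambda>x. _ * x"] cong: if_cong)
  also have "\<dots> = cl_pair N u u'"
    unfolding cl_pair_def u u' by (simp add: cl_lin_a_entry cl_lin_b_entry)
  finally show ?thesis .
qed

lemma cl_U_anticomm:
  assumes "u \<in> cl_U N" "v \<in> cl_U N"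
  shows "cl_add (cl_mult N u v) (cl_mult N v u) = cl_zero"
proof -
  obtain c e where "u = cl_lin N c (cl_a N)" "v = cl_lin N e (cl_a N)"
    using assms unfolding cl_U_def by blast
  moreover have "cl_add (cl_mult N (cl_lin N c (cl_a N)) (cl_lin N e (cl_a N)))
      (cl_mult N (cl_lin N e (cl_a N)) (cl_lin N c (cl_a N))) = cl_smult (\<Sum>k<N. \<Sum>l<N. c k * e l * 0) (cl_one N)"
    by (rule cl_anticomm_lin) (simp add: cl_a_anticomm cl_smult_zero)
  ultimately show ?thesis by (simp add: cl_smult_zero)
qed

lemma cl_U'_anticomm:
  assumes "u \<in> cl_U' N" "v \<in> cl_U' N"
  shows "cl_add (cl_mult N u v) (cl_mult N v u) = cl_zero"
proof -
  obtain c e where "u = cl_lin N c (cl_b N)" "v = cl_lin N e (cl_b N)"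
    using assms unfolding cl_U'_def by blast
  moreover have "cl_add (cl_mult N (cl_lin N c (cl_b N)) (cl_lin N e (cl_b N)))
      (cl_mult N (cl_lin N e (cl_b N)) (cl_lin N c (cl_b N))) = cl_smult (\<Sum>k<N. \<Sum>l<N. c k * e l * 0) (cl_one N)"
    by (rule cl_anticomm_lin) (simp add: cl_b_anticomm cl_smult_zero)
  ultimately show ?thesis by (simp add: cl_smult_zero)
qed

lemma cl_anticomm_apply:
  assumes "cl_add (cl_mult N x y) (cl_mult N y x) = cl_smult p (cl_one N)" "cl_supported N v"
  shows "cl_mult N y (cl_mult N x v) = cl_diff (cl_smult p v) (cl_mult N x (cl_mult N y v))"
proof -
  have "cl_add (cl_mult N x (cl_mult N y v)) (cl_mult N y (cl_mult N x v)) = cl_smult p v"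
    using arg_cong[OF assms(1), of "\<lambda>t. cl_mult N t v"]
    by (simp add: cl_mult_add_left cl_mult_smult_left cl_mult_assoc cl_one_mult[OF assms(2)])
  then show ?thesis
    unfolding cl_add_def cl_diff_def cl_smult_def by (simp add: fun_eq_iff eq_diff_eq add.commute)
qed

lemma cl_gl_commutator:
  assumes A: "A \<in> cl_U N" and C: "C \<in> cl_U N" and B: "B \<in> cl_U' N" and D: "D \<in> cl_U' N"
  shows "cl_comm N (cl_mult N A B) (cl_mult N C D)
       = cl_diff (cl_smult (cl_pair N C B) (cl_mult N A D)) (cl_smult (cl_pair N A D) (cl_mult N C B))"
proof -
  have "cl_mult N (cl_mult N A B) (cl_mult N C D)
      = cl_diff (cl_smult (cl_pair N C B) (cl_mult N A D)) (cl_mult N A (cl_mult N C (cl_mult N B D)))"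
    using cl_anticomm_apply[OF cl_U_U'_anticomm[OF C B] cl_supported_U'[OF D]]
    by (simp add: cl_mult_assoc cl_mult_diff_right cl_mult_smult_right)
  moreover have "cl_mult N (cl_mult N C D) (cl_mult N A B)
      = cl_diff (cl_smult (cl_pair N A D) (cl_mult N C B)) (cl_mult N C (cl_mult N A (cl_mult N D B)))"
    using cl_anticomm_apply[OF cl_U_U'_anticomm[OF A D] cl_supported_U'[OF B]]
    by (simp add: cl_mult_assoc cl_mult_diff_right cl_mult_smult_right)
  moreover have "cl_mult N C (cl_mult N A (cl_mult N D B)) = cl_mult N A (cl_mult N C (cl_mult N B D))"
  proof -
    have DB: "cl_mult N D B = cl_smult (-1) (cl_mult N B D)"
      using cl_U'_anticomm[OF B D]
      by (simp add: fun_eq_iff cl_add_def cl_smult_def cl_zero_def eq_neg_iff_add_eq_0 add.commute)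
    have "cl_mult N C (cl_mult N A (cl_mult N D B))
        = cl_diff (cl_smult 0 (cl_mult N D B)) (cl_mult N A (cl_mult N C (cl_mult N D B)))"
      by (rule cl_anticomm_apply)
        (simp_all add: cl_U_anticomm[OF A C] cl_smult_zero cl_supported_mult cl_supported_U' B D)
    then show ?thesis
      unfolding DB cl_mult_smult_right by (simp add: fun_eq_iff cl_diff_def cl_smult_def)
  qed
  ultimately show ?thesis
    unfolding cl_comm_def by (simp add: fun_eq_iff cl_diff_def cl_smult_def)
qed

section \<open>Euler degree\<close>

lemma cl_euler_homog_zero: "cl_euler_homog k cl_zero"
  unfolding cl_euler_homog_def cl_zero_def by auto

lemma cl_euler_homog_one: "cl_euler_homog 0 (cl_one N)"
  unfolding cl_euler_homog_def cl_one_def by auto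

lemma cl_euler_homog_add:
  "cl_euler_homog k x \<Longrightarrow> cl_euler_homog k y \<Longrightarrow> cl_euler_homog k (cl_add x y)"
  unfolding cl_euler_homog_def cl_add_def by (metis add.right_neutral add_0)

lemma cl_euler_homog_smult: "cl_euler_homog k x \<Longrightarrow> cl_euler_homog k (cl_smult c x)"
  unfolding cl_euler_homog_def cl_smult_def by auto

lemma cl_euler_homog_mult:
  assumes "cl_euler_homog k x" "cl_euler_homog l y"
  shows "cl_euler_homog (k + l) (cl_mult N x y)"
  unfolding cl_euler_homog_def
proof (intro allI impI)
  fix T S assume "cl_mult N x y T S \<noteq> 0"
  then obtain R where "x T R * y R S \<noteq> 0"
    unfolding cl_mult_def by (meson sum.not_neutral_contains_not_neutral)
  then have "int (card T) = int (card R) + k" "int (card R) = int (card S) + l"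
    using assms unfolding cl_euler_homog_def by auto
  then show "int (card T) = int (card S) + (k + l)" by simp
qed

lemma cl_euler_homog_lin:
  "(\<And>j. j < m \<Longrightarrow> cl_euler_homog k (f j)) \<Longrightarrow> cl_euler_homog k (cl_lin m c f)"
  by (induction m) (auto simp: cl_lin_0 cl_lin_Suc cl_euler_homog_zero cl_euler_homog_add cl_euler_homog_smult)

lemma cl_euler_homog_a: "cl_euler_homog 1 (cl_a N i)"
  unfolding cl_euler_homog_def cl_a_def by (auto dest: finite_subset)

lemma cl_euler_homog_b: "cl_euler_homog (-1) (cl_b N i)"
  unfolding cl_euler_homog_def
proof (intro allI impI)
  fix T S assume "cl_b N i T S \<noteq> 0"
  then have "finite S" "i \<in> S" "T = S - {i}"
    unfolding cl_b_def by (auto split: if_splits dest: finite_subset)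
  then have "card S = Suc (card T)" by (metis card_Suc_Diff1)
  then show "int (card T) = int (card S) + - 1" by simp
qed

lemma cl_euler_homog_U: "u \<in> cl_U N \<Longrightarrow> cl_euler_homog 1 u"
  unfolding cl_U_def by (auto intro!: cl_euler_homog_lin cl_euler_homog_a)

lemma cl_euler_homog_U': "u \<in> cl_U' N \<Longrightarrow> cl_euler_homog (-1) u"
  unfolding cl_U'_def by (auto intro!: cl_euler_homog_lin cl_euler_homog_b)

lemma PhiG_entry:
  "PhiG N n T S = (if T = S \<and> S \<subseteq> {..<N} then (\<Sum>i<N. n i) + of_nat (card S) else 0)"
proof -
  have "PhiG N n T S = (\<Sum>i<N. n i) * cl_one N T S + (\<Sum>i<N. cl_mult N (cl_a N i) (cl_b N i) T S)"
    unfolding PhiG_def by (simp add: sum.distrib sum_distrib_right)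
  also have "(\<Sum>i<N. cl_mult N (cl_a N i) (cl_b N i) T S)
      = (\<Sum>i<N. if S \<subseteq> {..<N} \<and> i \<in> S \<and> T = S then 1 else 0)"
    by (intro sum.cong) (auto simp: cl_a_b_same_entry)
  also have "\<dots> = (if S \<subseteq> {..<N} \<and> T = S then of_nat (card S) else 0)"
  proof (cases "S \<subseteq> {..<N} \<and> T = S")
    case True
    then have "{..<N} \<inter> S = S" by auto
    then show ?thesis using True by (simp add: sum.If_cases)
  next
    case False
    then have "(\<Sum>i<N. if S \<subseteq> {..<N} \<and> i \<in> S \<and> T = S then 1 else 0) = (0::complex)"
      by (intro sum.neutral) auto
    then show ?thesis using False by (simp only: if_False)
  qed
  finally show ?thesis by (auto simp: cl_one_def)
qed

lemma cl_commute_PhiG_iff: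
  assumes "cl_supported N x"
  shows "cl_mult N x (PhiG N n) = cl_mult N (PhiG N n) x \<longleftrightarrow> cl_euler_homog 0 x"
proof -
  define D where "D S = (\<Sum>i<N. n i) + of_nat (card S)" for S :: "nat set"
  have right: "cl_mult N x (PhiG N n) T S = x T S * D S" for T S
  proof (cases "S \<subseteq> {..<N}")
    case True
    have "cl_mult N x (PhiG N n) T S = (\<Sum>R\<in>Pow {..<N}. if R = S then x T R * D S else 0)"
      unfolding cl_mult_def PhiG_entry D_def by (intro sum.cong) auto
    then show ?thesis using True by simp
  next
    case False
    then have "x T S = 0" using assms unfolding cl_supported_def by blast
    then show ?thesis using False unfolding cl_mult_def PhiG_entry by (auto intro!: sum.neutral)
  qed
  have left: "cl_mult N (PhiG N n) x T S = D T * x T S" for T S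
  proof (cases "T \<subseteq> {..<N}")
    case True
    have "cl_mult N (PhiG N n) x T S = (\<Sum>R\<in>Pow {..<N}. if R = T then D T * x R S else 0)"
      unfolding cl_mult_def PhiG_entry D_def by (intro sum.cong) auto
    then show ?thesis using True by (simp add: sum.delta')
  next
    case False
    then have "x T S = 0" using assms unfolding cl_supported_def by blast
    then show ?thesis using False unfolding cl_mult_def PhiG_entry by (auto intro!: sum.neutral)
  qed
  have "cl_mult N x (PhiG N n) = cl_mult N (PhiG N n) x \<longleftrightarrow> (\<forall>T S. x T S * D S = D T * x T S)"
    by (simp add: fun_eq_iff left right)
  also have "\<dots> \<longleftrightarrow> cl_euler_homog 0 x"
    unfolding cl_euler_homog_def D_def by (auto simp: algebra_simps) metis+
  finally show ?thesis .
qed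

lemma cl_gen_mono:
  assumes "G \<subseteq> H" "x \<in> cl_gen N G" shows "x \<in> cl_gen N H"
  using assms(2) by induction (use assms(1) in \<open>auto intro: cl_gen.intros\<close>)

text \<open>Words are built by left multiplication only, so that the projection to a fixed Euler
degree can be pushed through one homogeneous letter at a time.\<close>

inductive_set cl_words :: "nat \<Rightarrow> cl set \<Rightarrow> cl set" for N G where
  one: "cl_one N \<in> cl_words N G"
| mult: "g \<in> G \<Longrightarrow> x \<in> cl_words N G \<Longrightarrow> cl_mult N g x \<in> cl_words N G"
| add: "x \<in> cl_words N G \<Longrightarrow> y \<in> cl_words N G \<Longrightarrow> cl_add x y \<in> cl_words N G"
| smult: "x \<in> cl_words N G \<Longrightarrow> cl_smult c x \<in> cl_words N G"

lemma cl_supported_words: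
  assumes "\<And>g. g \<in> G \<Longrightarrow> cl_supported N g" "x \<in> cl_words N G"
  shows "cl_supported N x"
  using assms(2)
  by induction (auto intro: assms(1) cl_supported_one cl_supported_add cl_supported_smult cl_supported_mult)

lemma cl_words_mult:
  assumes "\<And>g. g \<in> G \<Longrightarrow> cl_supported N g" "x \<in> cl_words N G" "y \<in> cl_words N G"
  shows "cl_mult N x y \<in> cl_words N G"
  using assms(2)
proof induction
  case one
  then show ?case using cl_one_mult[OF cl_supported_words[OF assms(1,3)]] assms(3) by simp
qed (auto simp: cl_mult_assoc cl_mult_add_left cl_mult_smult_left intro: cl_words.intros)

lemma cl_gen_subset_words:
  assumes "\<And>g. g \<in> G \<Longrightarrow> cl_supported N g" "x \<in> cl_gen N G"
  shows "x \<in> cl_words N G"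
  using assms(2)
proof induction
  case (gen x)
  then have "cl_mult N x (cl_one N) \<in> cl_words N G" by (simp add: cl_words.mult cl_words.one)
  then show ?case using cl_mult_one[OF assms(1)] gen by simp
qed (auto intro: cl_words.intros cl_words_mult[OF assms(1)])

definition cl_euler_part :: "int \<Rightarrow> cl \<Rightarrow> cl" where
  "cl_euler_part k x = (\<lambda>T S. if int (card T) = int (card S) + k then x T S else 0)"

lemma cl_euler_part_mult:
  assumes "cl_euler_homog h g"
  shows "cl_euler_part k (cl_mult N g y) = cl_mult N g (cl_euler_part (k - h) y)"
proof (intro ext)
  fix T S
  have factor: "(if int (card T) = int (card S) + k then g T R * y R S else 0)
      = g T R * (if int (card R) = int (card S) + (k - h) then y R S else 0)" for R
    using assms unfolding cl_euler_homog_def by (cases "g T R = 0") auto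
  have "cl_euler_part k (cl_mult N g y) T S
      = (\<Sum>R\<in>Pow {..<N}. if int (card T) = int (card S) + k then g T R * y R S else 0)"
    unfolding cl_euler_part_def cl_mult_def by simp
  also have "\<dots> = cl_mult N g (cl_euler_part (k - h) y) T S"
    unfolding cl_mult_def cl_euler_part_def factor ..
  finally show "cl_euler_part k (cl_mult N g y) T S = cl_mult N g (cl_euler_part (k - h) y) T S" .
qed

lemma cl_euler_part_add: "cl_euler_part k (cl_add x y) = cl_add (cl_euler_part k x) (cl_euler_part k y)"
  unfolding cl_euler_part_def cl_add_def by (intro ext) auto

lemma cl_euler_part_smult: "cl_euler_part k (cl_smult c x) = cl_smult c (cl_euler_part k x)"
  unfolding cl_euler_part_def cl_smult_def by (intro ext) auto

lemma cl_euler_part_one: "cl_euler_part k (cl_one N) = (if k = 0 then cl_one N else cl_zero)"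
  unfolding cl_euler_part_def cl_one_def cl_zero_def by (intro ext) auto

lemma cl_euler_part_homog: "cl_euler_homog k x \<Longrightarrow> cl_euler_part k x = x"
  unfolding cl_euler_part_def cl_euler_homog_def by (intro ext) metis

section \<open>The degree zero part of the algebra generated by W and W'\<close>

locale cl_span_pair =
  fixes N d :: nat and w w' :: "nat \<Rightarrow> cl"
  assumes span_subset_U: "cl_span d w \<subseteq> cl_U N"
    and span_subset_U': "cl_span d w' \<subseteq> cl_U' N"
begin

abbreviation gl_image :: "cl set" where
  "gl_image \<equiv> cl_gen N {cl_mult N (w i) (w' j) | i j. i < d \<and> j < d}"

lemma w_in_U: "k < d \<Longrightarrow> w k \<in> cl_U N"
  using cl_span_member[of k d w] span_subset_U by blast

lemma w'_in_U': "k < d \<Longrightarrow> w' k \<in> cl_U' N"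
  using cl_span_member[of k d w'] span_subset_U' by blast

lemma cl_supported_spans: "g \<in> cl_span d w \<union> cl_span d w' \<Longrightarrow> cl_supported N g"
  using span_subset_U span_subset_U' cl_supported_U cl_supported_U' by (meson UnE subsetD)

lemma cl_supported_gl_image: "x \<in> gl_image \<Longrightarrow> cl_supported N x"
  by (rule cl_supported_gen[of _ N])
    (auto intro!: cl_supported_mult intro: cl_supported_U cl_supported_U' w_in_U w'_in_U')

lemma gl_image_zero: "cl_zero \<in> gl_image"
proof -
  have "cl_smult 0 (cl_one N) \<in> gl_image" by (intro cl_gen.smult cl_gen.one)
  then show ?thesis by (simp only: cl_smult_zero)
qed

lemma gl_image_lin: "(\<And>k. k < m \<Longrightarrow> f k \<in> gl_image) \<Longrightarrow> cl_lin m c f \<in> gl_image"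
  by (induction m) (auto simp: cl_lin_0 cl_lin_Suc gl_image_zero intro: cl_gen.intros)

lemma gl_image_diff: "x \<in> gl_image \<Longrightarrow> y \<in> gl_image \<Longrightarrow> cl_diff x y \<in> gl_image"
  unfolding cl_diff_eq_add_smult by (intro cl_gen.add cl_gen.smult)

lemma w_mult_span_in_gl_image:
  assumes "i < d" "u' \<in> cl_span d w'" shows "cl_mult N (w i) u' \<in> gl_image"
proof -
  obtain c where u': "u' = cl_lin d c w'" using assms(2) by blast
  have "cl_lin d c (\<lambda>k. cl_mult N (w i) (w' k)) \<in> gl_image"
    by (rule gl_image_lin, rule cl_gen.gen) (use assms(1) in blast)
  then show ?thesis unfolding u' cl_mult_lin_right .
qed

lemma span_mult_w'_in_gl_image:
  assumes "j < d" "u \<in> cl_span d w" shows "cl_mult N u (w' j) \<in> gl_image"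
proof -
  obtain c where u: "u = cl_lin d c w" using assms(2) by blast
  have "cl_lin d c (\<lambda>k. cl_mult N (w k) (w' j)) \<in> gl_image"
    by (rule gl_image_lin, rule cl_gen.gen) (use assms(1) in blast)
  then show ?thesis unfolding u cl_mult_lin_left .
qed

text \<open>ordered_span k is spanned by the normally ordered words w_i1 ... w_ik q (k >= 0),
resp. w'_j1 ... w'_j(-k) q (k <= 0), with q in gl_image.\<close>

inductive ordered_span :: "int \<Rightarrow> cl \<Rightarrow> bool" where
  gl_image: "x \<in> gl_image \<Longrightarrow> ordered_span 0 x"
| raise: "k \<ge> 0 \<Longrightarrow> i < d \<Longrightarrow> ordered_span k x \<Longrightarrow> ordered_span (k + 1) (cl_mult N (w i) x)"
| lower: "k \<le> 0 \<Longrightarrow> j < d \<Longrightarrow> ordered_span k x \<Longrightarrow> ordered_span (k - 1) (cl_mult N (w' j) x)"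
| zero: "ordered_span k cl_zero"
| add: "ordered_span k x \<Longrightarrow> ordered_span k y \<Longrightarrow> ordered_span k (cl_add x y)"
| smult: "ordered_span k x \<Longrightarrow> ordered_span k (cl_smult c x)"

lemma ordered_span_diff: "ordered_span k x \<Longrightarrow> ordered_span k y \<Longrightarrow> ordered_span k (cl_diff x y)"
  unfolding cl_diff_eq_add_smult by (intro ordered_span.add ordered_span.smult)

lemma ordered_span_lin: "(\<And>j. j < m \<Longrightarrow> ordered_span k (f j)) \<Longrightarrow> ordered_span k (cl_lin m c f)"
  by (induction m) (auto simp: cl_lin_0 cl_lin_Suc intro: ordered_span.intros)

lemma ordered_span_0_gl_image: "ordered_span k x \<Longrightarrow> k = 0 \<Longrightarrow> x \<in> gl_image"
  by (induction rule: ordered_span.induct) (auto simp: gl_image_zero intro: cl_gen.intros)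

lemma cl_supported_ordered_span: "ordered_span k x \<Longrightarrow> cl_supported N x"
  by (induction rule: ordered_span.induct)
    (auto intro: cl_supported_gl_image cl_supported_zero cl_supported_add cl_supported_smult
      cl_supported_mult cl_supported_U cl_supported_U' w_in_U w'_in_U')

lemma ordered_span_raise_span:
  "k \<ge> 0 \<Longrightarrow> ordered_span k x \<Longrightarrow> u \<in> cl_span d w \<Longrightarrow> ordered_span (k + 1) (cl_mult N u x)"
  by (auto simp: cl_mult_lin_left intro!: ordered_span_lin ordered_span.raise)

lemma ordered_span_lower_span:
  "k \<le> 0 \<Longrightarrow> ordered_span k x \<Longrightarrow> u' \<in> cl_span d w' \<Longrightarrow> ordered_span (k - 1) (cl_mult N u' x)"
  by (auto simp: cl_mult_lin_left intro!: ordered_span_lin ordered_span.lower)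

lemma ordered_span_mult_span_w:
  "ordered_span k x \<Longrightarrow> u \<in> cl_span d w \<Longrightarrow> ordered_span (k + 1) (cl_mult N u x)"
proof (induction arbitrary: u rule: ordered_span.induct)
  case (gl_image x)
  then show ?case by (intro ordered_span_raise_span ordered_span.gl_image) auto
next
  case (raise k i x)
  then show ?case by (intro ordered_span_raise_span ordered_span.raise) auto
next
  case (lower k j x)
  have uU: "u \<in> cl_U N" using lower.prems span_subset_U by blast
  have swap: "cl_mult N u (cl_mult N (w' j) x)
      = cl_diff (cl_smult (cl_pair N u (w' j)) x) (cl_mult N (w' j) (cl_mult N u x))"
    using cl_U_U'_anticomm[OF uU w'_in_U'[OF lower.hyps(2)]]
    by (intro cl_anticomm_apply cl_supported_ordered_span[OF lower.hyps(3)]) (simp add: cl_add_commute)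
  show ?case
  proof (cases "k = 0")
    case True
    then have "x \<in> gl_image" using ordered_span_0_gl_image lower.hyps(3) by blast
    then have "cl_mult N (cl_mult N u (w' j)) x \<in> gl_image"
      using span_mult_w'_in_gl_image[OF lower.hyps(2) lower.prems] by (blast intro: cl_gen.mult)
    then show ?thesis using True by (simp add: cl_mult_assoc ordered_span.gl_image)
  next
    case False
    then have "ordered_span (k + 1 - 1) (cl_mult N (w' j) (cl_mult N u x))"
      using lower by (intro ordered_span.lower) auto
    then show ?thesis
      unfolding swap using lower.hyps(3) by (auto intro!: ordered_span_diff ordered_span.smult)
  qed
qed (auto simp: cl_mult_zero_right cl_mult_add_right cl_mult_smult_right intro: ordered_span.intros)

lemma ordered_span_mult_span_w':
  "ordered_span k x \<Longrightarrow> u' \<in> cl_span d w' \<Longrightarrow> ordered_span (k - 1) (cl_mult N u' x)"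
proof (induction arbitrary: u' rule: ordered_span.induct)
  case (gl_image x)
  then show ?case by (intro ordered_span_lower_span ordered_span.gl_image) auto
next
  case (lower k j x)
  then show ?case by (intro ordered_span_lower_span ordered_span.lower) auto
next
  case (raise k i x)
  have u'U': "u' \<in> cl_U' N" using raise.prems span_subset_U' by blast
  have swap: "cl_mult N u' (cl_mult N (w i) x)
      = cl_diff (cl_smult (cl_pair N (w i) u') x) (cl_mult N (w i) (cl_mult N u' x))"
    by (intro cl_anticomm_apply cl_U_U'_anticomm cl_supported_ordered_span[OF raise.hyps(3)]
        w_in_U[OF raise.hyps(2)] u'U')
  show ?case
  proof (cases "k = 0")
    case True
    then have "x \<in> gl_image" using ordered_span_0_gl_image raise.hyps(3) by blast
    moreover have "cl_mult N (cl_mult N (w i) u') x \<in> gl_image"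
      using calculation w_mult_span_in_gl_image[OF raise.hyps(2) raise.prems] by (blast intro: cl_gen.mult)
    ultimately have "cl_diff (cl_smult (cl_pair N (w i) u') x) (cl_mult N (w i) (cl_mult N u' x)) \<in> gl_image"
      by (simp add: cl_mult_assoc gl_image_diff cl_gen.smult)
    then show ?thesis unfolding swap using True by (simp add: ordered_span.gl_image)
  next
    case False
    then have "ordered_span (k - 1 + 1) (cl_mult N (w i) (cl_mult N u' x))"
      using raise by (intro ordered_span.raise) auto
    then show ?thesis
      unfolding swap using raise.hyps(3) by (auto intro!: ordered_span_diff ordered_span.smult)
  qed
qed (auto simp: cl_mult_zero_right cl_mult_add_right cl_mult_smult_right intro: ordered_span.intros)

lemma ordered_span_euler_part:
  "x \<in> cl_words N (cl_span d w \<union> cl_span d w') \<Longrightarrow> ordered_span k (cl_euler_part k x)"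
proof (induction x arbitrary: k rule: cl_words.induct)
  case one
  then show ?case by (auto simp: cl_euler_part_one intro: ordered_span.intros cl_gen.one)
next
  case (mult g x)
  show ?case
  proof (cases "g \<in> cl_span d w")
    case True
    then have "cl_euler_homog 1 g" using span_subset_U cl_euler_homog_U by blast
    then show ?thesis
      using ordered_span_mult_span_w[OF mult.IH[of "k - 1"] True] by (simp add: cl_euler_part_mult)
  next
    case False
    then have g: "g \<in> cl_span d w'" using mult.hyps by blast
    then have "cl_euler_homog (-1) g" using span_subset_U' cl_euler_homog_U' by blast
    then show ?thesis
      using ordered_span_mult_span_w'[OF mult.IH[of "k + 1"] g] by (simp add: cl_euler_part_mult)
  qed
qed (auto simp: cl_euler_part_add cl_euler_part_smult intro: ordered_span.intros)

lemma euler_zero_part_subset_gl_image: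
  assumes "x \<in> cl_gen N (cl_span d w \<union> cl_span d w')" "cl_euler_homog 0 x"
  shows "x \<in> gl_image"
proof -
  have "x \<in> cl_words N (cl_span d w \<union> cl_span d w')"
    using cl_gen_subset_words cl_supported_spans assms(1) by blast
  then have "ordered_span 0 (cl_euler_part 0 x)" by (rule ordered_span_euler_part)
  then show ?thesis using ordered_span_0_gl_image cl_euler_part_homog[OF assms(2)] by auto
qed

lemma pair_products_euler_zero:
  assumes "x \<in> cl_gen N {cl_mult N u u' | u u'. u \<in> cl_span d w \<and> u' \<in> cl_span d w'}"
  shows "x \<in> cl_gen N (cl_span d w \<union> cl_span d w') \<and> cl_euler_homog 0 x"
  using assms
proof (induction x rule: cl_gen.induct)
  case (gen x)
  then obtain u u' where x: "x = cl_mult N u u'" and u: "u \<in> cl_span d w" and u': "u' \<in> cl_span d w'"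
    by blast
  have "cl_euler_homog (1 + -1) x"
    unfolding x using u u' span_subset_U span_subset_U'
    by (intro cl_euler_homog_mult cl_euler_homog_U cl_euler_homog_U') auto
  then show ?case unfolding x using u u' by (auto intro: cl_gen.mult cl_gen.gen)
next
  case (mult x y)
  then show ?case using cl_euler_homog_mult[of 0 x 0 y N] by (auto intro: cl_gen.mult)
qed (auto intro: cl_gen.intros cl_euler_homog_one cl_euler_homog_add cl_euler_homog_smult)

lemma gl_image_subset_pair_products:
  "gl_image \<subseteq> cl_gen N {cl_mult N u u' | u u'. u \<in> cl_span d w \<and> u' \<in> cl_span d w'}"
proof
  fix x assume "x \<in> gl_image"
  then show "x \<in> cl_gen N {cl_mult N u u' | u u'. u \<in> cl_span d w \<and> u' \<in> cl_span d w'}"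
    by (rule cl_gen_mono[rotated]) (use cl_span_member[of _ d w] cl_span_member[of _ d w'] in blast)
qed

theorem euler_zero_part_eq_pair_products:
  "{x \<in> cl_gen N (cl_span d w \<union> cl_span d w'). cl_euler_homog 0 x}
     = cl_gen N {cl_mult N u u' | u u'. u \<in> cl_span d w \<and> u' \<in> cl_span d w'}"
  using pair_products_euler_zero euler_zero_part_subset_gl_image gl_image_subset_pair_products
  by (intro equalityI subsetI) (simp_all, blast)

theorem euler_zero_part_eq_gl_image:
  "gl_image = {x \<in> cl_gen N (cl_span d w \<union> cl_span d w'). cl_euler_homog 0 x}"
  using pair_products_euler_zero euler_zero_part_subset_gl_image gl_image_subset_pair_products
  by (intro equalityI subsetI) (simp_all, blast)

end
theorem mainTheorem3:
  fixes N d :: nat and z n :: "nat \<Rightarrow> complex" and w w' :: "nat \<Rightarrow> cl"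
  assumes "N \<ge> 1"
    and "\<forall>i<N. z i \<noteq> 0"
    and "(\<Prod>i<N. z i)^2 - (inverse (\<Prod>i<N. z i))^2 \<noteq> 0"
    and "\<forall>k<d. w k \<in> cl_W N z" and "\<forall>k<d. w' k \<in> cl_W' N z"
    and "cl_W N z = {cl_lin d c w | c. True}"
    and "\<forall>c. cl_lin d c w = cl_zero \<longrightarrow> (\<forall>k<d. c k = 0)"
    and "cl_W' N z = {cl_lin d c w' | c. True}"
    and "\<forall>c. cl_lin d c w' = cl_zero \<longrightarrow> (\<forall>k<d. c k = 0)"
    and "\<forall>i<d. \<forall>j<d. cl_pair N (w i) (w' j) = (if i = j then 1 else 0)"
  shows "{x \<in> cl_gen N (cl_W N z \<union> cl_W' N z). cl_mult N x (PhiG N n) = cl_mult N (PhiG N n) x}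
           = {x \<in> cl_gen N (cl_W N z \<union> cl_W' N z). cl_euler_homog 0 x}
       \<and> {x \<in> cl_gen N (cl_W N z \<union> cl_W' N z). cl_euler_homog 0 x}
           = cl_gen N {cl_mult N u u' | u u'. u \<in> cl_W N z \<and> u' \<in> cl_W' N z}
       \<and> (\<forall>i<d. \<forall>j<d. \<forall>k<d. \<forall>l<d.
            cl_comm N (cl_mult N (w i) (w' j)) (cl_mult N (w k) (w' l))
              = cl_diff (cl_smult (if j = k then 1 else 0) (cl_mult N (w i) (w' l)))
                        (cl_smult (if l = i then 1 else 0) (cl_mult N (w k) (w' j))))
       \<and> cl_gen N {cl_mult N (w i) (w' j) | i j. i < d \<and> j < d}
           = {x \<in> cl_gen N (cl_W N z \<union> cl_W' N z). cl_euler_homog 0 x}"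
proof -
  txt \<open>The conditions on z and the linear independence of the bases only serve to guarantee
    that such dual bases exist; the argument itself does not need them.\<close>
  have W: "cl_W N z = cl_span d w" and W': "cl_W' N z = cl_span d w'"
    using assms(6,8) by simp_all
  interpret cl_span_pair N d w w'
  proof
    show "cl_span d w \<subseteq> cl_U N" unfolding W[symmetric] cl_W_def by blast
    show "cl_span d w' \<subseteq> cl_U' N" unfolding W'[symmetric] cl_W'_def by blast
  qed
  have commute: "{x \<in> cl_gen N (cl_span d w \<union> cl_span d w'). cl_mult N x (PhiG N n) = cl_mult N (PhiG N n) x}
      = {x \<in> cl_gen N (cl_span d w \<union> cl_span d w'). cl_euler_homog 0 x}"
    using cl_commute_PhiG_iff cl_supported_gen[OF cl_supported_spans] by blast
  have gl: "cl_comm N (cl_mult N (w i) (w' j)) (cl_mult N (w k) (w' l))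
      = cl_diff (cl_smult (if j = k then 1 else 0) (cl_mult N (w i) (w' l)))
                (cl_smult (if l = i then 1 else 0) (cl_mult N (w k) (w' j)))"
    if "i < d" "j < d" "k < d" "l < d" for i j k l
    using cl_gl_commutator[OF w_in_U w_in_U w'_in_U' w'_in_U'] assms(10) that by auto
  show ?thesis
    unfolding W W'
    by (intro conjI allI impI commute euler_zero_part_eq_pair_products gl euler_zero_part_eq_gl_image)
qed

end
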